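(* Let $d\ge 1$ and $p\ge 2$ be integers, let $s\ge p$ be an integer, and let $L,M>0$. Let $f:\mathbb{R}^d\to\mathbb{R}$ be a convex function with a minimizer $x^*$. Let $y_c=[v_c;x_c;t_c]\in\mathbb{R}^{2d+1}$ with $t_c\ge 1$, and set $R=1/t_c$. Suppose that on the closed ball $B(x_c,R)=\{x\in\mathbb{R}^d:\|x-x_c\|\le R\}$ the function $f$ is $(s+1)$-times continuously differentiable and satisfies (i) $\|\nabla^{(i)} f(x)\|\le \big[L\,(f(x)-f(x^* ))\big]^{\frac{p-i}{p}}$ for all $x\in B(x_c,R)$ and all $i\in\{1,\dots,p-1\}$, and (ii) $\|\nabla^{(i)} f(x)\|\le M$ for all $x\in B(x_c,R)$ and all $i\in\{p,\dots,s+1\}$. Then for every $y=[v;x;t]\in U_{R,0.2}(y_c)$ and every $i\in\{1,\dots,p\}$, $$\|\nabla^{(i)} f(x)\|\le p\,(M+L+1)\,\frac{\mathcal{E}(y_c)+1}{t_c^{\,p-i}}.$$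
   Context: Norms of derivative tensors $\nabla^{(i)}f(x)$ are operator norms (viewing $\nabla^{(i)}f(x)$ as a multilinear map on $(\mathbb{R}^d)^i$). Points of $\mathbb{R}^{2d+1}$ are written $y=[v;x;t]$ with $v,x\in\mathbb{R}^d$, $t\in\mathbb{R}$. The set $U_{R,0.2}(y_c)=\{[v;x;t]:\|v-v_c\|\le R,\ \|x-x_c\|\le R,\ |t-t_c|\le 0.2\}$. The Lyapunov function is $\mathcal{E}([v;x;t])=\frac{t^2}{4p^2}\|v\|^2+\big\|x+\frac{t}{2p}v-x^*\big\|^2+t^p\,(f(x)-f(x^* ))$. *)

theory Defs
  imports "HOL-Analysis.Analysis"
begin

text \<open>Higher derivatives as multilinear maps, evaluated on a list of directions.
  dderiv S f [h1,...,hk] x is the k-th Frechet derivative of f (taken within S)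
  at x applied to (h1,...,hk); the newest (outermost) differentiation direction is the head.\<close>
fun dderiv :: "'a::euclidean_space set \<Rightarrow> ('a \<Rightarrow> real) \<Rightarrow> 'a list \<Rightarrow> 'a \<Rightarrow> real" where
  "dderiv S f [] = f"
| "dderiv S f (h # hs) = (\<lambda>x. frechet_derivative (dderiv S f hs) (at x within S) h)"

definition Ck_on :: "nat \<Rightarrow> 'a::euclidean_space set \<Rightarrow> ('a \<Rightarrow> real) \<Rightarrow> bool" where
  "Ck_on k S f \<longleftrightarrow>
     (\<forall>hs. length hs < k \<longrightarrow> (\<forall>x\<in>S.
        (dderiv S f hs has_derivative (\<lambda>h. dderiv S f (h # hs) x)) (at x within S))) \<and>
     (\<forall>hs. length hs \<le> k \<longrightarrow> continuous_on S (dderiv S f hs))"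

definition dnorm :: "nat \<Rightarrow> 'a::euclidean_space set \<Rightarrow> ('a \<Rightarrow> real) \<Rightarrow> 'a \<Rightarrow> real" where
  "dnorm i S f x = Sup {\<bar>dderiv S f hs x\<bar> | hs. length hs = i \<and> (\<forall>h\<in>set hs. norm h \<le> 1)}"

definition lyap :: "nat \<Rightarrow> ('a::euclidean_space \<Rightarrow> real) \<Rightarrow> 'a \<Rightarrow> 'a \<Rightarrow> 'a \<Rightarrow> real \<Rightarrow> real" where
  "lyap p f xstar v x t =
     t\<^sup>2 / (4 * (real p)\<^sup>2) * (norm v)\<^sup>2 + (norm (x + (t / (2 * real p)) *\<^sub>R v - xstar))\<^sup>2
     + t ^ p * (f x - f xstar)"

end

theory Submission
  imports Defs "HOL-Analysis.Analysis"
begin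

text \<open>
  Fix unit directions h_1, ..., h_i with i < p and expand the derivative
  D^i f(x)[h_1, ..., h_i] by Taylor's formula of order p - i along the segment from x_c to x.
  The coefficients are derivatives of order j in [i, p) at the centre, bounded by (i) through
  (L (f(x_c) - f(x^*)))^((p - j)/p); since t_c^p (f(x_c) - f(x^*)) <= E(y_c), each coefficient
  times R^(j - i) is at most (L E(y_c) + 1) / t_c^(p - i). The Lagrange remainder is a p-th
  derivative on the ball, bounded by (ii), times R^(p - i). Points on the sphere are reached by
  continuity. For i = p the claim is (ii) itself.
\<close>

declare dderiv.simps(2)[simp del]

lemma Ck_on_has_derivative:
  assumes "Ck_on N S f" "length hs < N" "x \<in> S"
  shows "(dderiv S f hs has_derivative (\<lambda>h. dderiv S f (h # hs) x)) (at x within S)"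
  using assms unfolding Ck_on_def by blast

lemma Ck_on_continuous_on:
  assumes "Ck_on N S f" "length hs \<le> N"
  shows "continuous_on S (dderiv S f hs)"
  using assms unfolding Ck_on_def by blast

lemma Ck_on_cball_has_derivative_at:
  assumes "Ck_on N (cball c R) f" "length hs < N" "x \<in> ball c R"
  shows "(dderiv (cball c R) f hs has_derivative (\<lambda>h. dderiv (cball c R) f (h # hs) x)) (at x)"
proof -
  have "at x within cball c R = at x"
    using assms(3) by (metis at_within_interior interior_cball)
  moreover have "x \<in> cball c R"
    using assms(3) by simp
  ultimately show ?thesis
    using Ck_on_has_derivative[OF assms(1,2)] by metis
qed

lemma continuous_on_cball_eqI:
  fixes F G :: "'a::real_normed_vector \<Rightarrow> 'b::real_normed_vector"
  assumes "R > 0" "continuous_on (cball c R) F" "continuous_on (cball c R) G"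
    and "\<And>y. y \<in> ball c R \<Longrightarrow> F y = G y" and "y \<in> cball c R"
  shows "F y = G y"
proof -
  have "(\<lambda>y. F y - G y) y = 0"
    by (rule continuous_constant_on_closure[where S="ball c R"])
      (use assms in \<open>auto intro: continuous_on_diff\<close>)
  then show ?thesis by simp
qed

lemma linear_derivative_of_linear_family:
  fixes G :: "'h::real_vector \<Rightarrow> 'a::real_normed_vector \<Rightarrow> 'b::real_normed_vector"
  assumes "open U" "z \<in> U"
    and deriv: "\<And>h. (G h has_derivative D h) (at z)"
    and lin: "\<And>w. w \<in> U \<Longrightarrow> linear (\<lambda>h. G h w)"
  shows "linear (\<lambda>h. D h a)"
proof (rule linearI)
  fix h1 h2
  have "(G (h1 + h2) has_derivative (\<lambda>a. D h1 a + D h2 a)) (at z)"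
    by (rule has_derivative_transform_within_open[OF has_derivative_add[OF deriv deriv] assms(1,2)])
      (simp add: linear_add[OF lin])
  then show "D (h1 + h2) a = D h1 a + D h2 a"
    using has_derivative_unique[OF deriv] by metis
next
  fix r h
  have "(G (r *\<^sub>R h) has_derivative (\<lambda>a. r *\<^sub>R D h a)) (at z)"
    by (rule has_derivative_transform_within_open[OF has_derivative_scaleR_right[OF deriv] assms(1,2)])
      (simp add: linear_scale[OF lin])
  then show "D (r *\<^sub>R h) a = r *\<^sub>R D h a"
    using has_derivative_unique[OF deriv] by metis
qed

lemma linear_dderiv_slot:
  fixes f :: "'a::euclidean_space \<Rightarrow> real"
  assumes ck: "Ck_on N (cball c R) f" and R: "R > 0"
  shows "length as + length bs < N \<Longrightarrow> y \<in> cball c R \<Longrightarrow>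
    linear (\<lambda>h. dderiv (cball c R) f (as @ h # bs) y)"
proof (induction as arbitrary: y)
  case Nil
  then show ?case
    using Ck_on_has_derivative[OF ck] has_derivative_linear by fastforce
next
  case (Cons a as)
  let ?S = "cball c R"
  have linear_on_ball: "linear (\<lambda>h. dderiv ?S f (a # as @ h # bs) z)" if z: "z \<in> ball c R" for z
  proof (rule linear_derivative_of_linear_family[where U="ball c R" and z=z
        and G="\<lambda>h. dderiv ?S f (as @ h # bs)" and D="\<lambda>h a. dderiv ?S f (a # as @ h # bs) z"])
    show "(dderiv ?S f (as @ h # bs) has_derivative (\<lambda>a. dderiv ?S f (a # as @ h # bs) z)) (at z)"
      for h using Ck_on_cball_has_derivative_at[OF ck _ z] Cons.prems(1) by simp
    show "linear (\<lambda>h. dderiv ?S f (as @ h # bs) w)" if "w \<in> ball c R" for w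
      using Cons that by simp
  qed (use z in auto)
  have cont: "continuous_on ?S (dderiv ?S f (a # as @ h # bs))" for h
    using Ck_on_continuous_on[OF ck] Cons.prems(1) by simp
  show ?case
  proof (rule linearI)
    fix h1 h2
    show "dderiv ?S f ((a # as) @ (h1 + h2) # bs) y
        = dderiv ?S f ((a # as) @ h1 # bs) y + dderiv ?S f ((a # as) @ h2 # bs) y"
      using continuous_on_cball_eqI[OF R cont continuous_on_add[OF cont cont] _ Cons.prems(2)]
        linear_add[OF linear_on_ball] by simp
  next
    fix r h
    show "dderiv ?S f ((a # as) @ (r *\<^sub>R h) # bs) y = r *\<^sub>R dderiv ?S f ((a # as) @ h # bs) y"
      using continuous_on_cball_eqI[OF R cont continuous_on_mult_left[OF cont] _ Cons.prems(2)]
        linear_scale[OF linear_on_ball] by simp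
  qed
qed

lemma linear_abs_le_sum_Basis:
  fixes L :: "'a::euclidean_space \<Rightarrow> real"
  assumes lin: "linear L" and h: "norm h \<le> 1"
  shows "\<bar>L h\<bar> \<le> (\<Sum>i\<in>Basis. \<bar>L i\<bar>)"
proof -
  have "L h = (\<Sum>i\<in>Basis. (h \<bullet> i) * L i)"
    using linear_sum[OF lin, of "\<lambda>i. (h \<bullet> i) *\<^sub>R i" Basis] linear_scale[OF lin]
    by (simp add: euclidean_representation)
  also have "\<bar>\<dots>\<bar> \<le> (\<Sum>i\<in>Basis. \<bar>h \<bullet> i\<bar> * \<bar>L i\<bar>)"
    unfolding abs_mult[symmetric] by (rule sum_abs)
  also have "\<dots> \<le> (\<Sum>i\<in>Basis. \<bar>L i\<bar>)"
  proof (intro sum_mono mult_left_le_one_le)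
    show "\<bar>h \<bullet> i\<bar> \<le> 1" if "i \<in> Basis" for i
      using Basis_le_norm[OF that, of h] h by linarith
  qed auto
  finally show ?thesis .
qed

lemma dderiv_bounded_on_unit_directions:
  fixes f :: "'a::euclidean_space \<Rightarrow> real"
  assumes ck: "Ck_on N (cball c R) f" and R: "R > 0" and y: "y \<in> cball c R"
  shows "length as + n \<le> N \<Longrightarrow> \<exists>C. \<forall>bs. length bs = n \<and> (\<forall>h\<in>set bs. norm h \<le> 1)
           \<longrightarrow> \<bar>dderiv (cball c R) f (as @ bs) y\<bar> \<le> C"
proof (induction n arbitrary: as)
  case 0
  then show ?case by auto
next
  case (Suc n)
  let ?S = "cball c R"
  have "\<exists>C. \<forall>bs. length bs = n \<and> (\<forall>h\<in>set bs. norm h \<le> 1)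
           \<longrightarrow> \<bar>dderiv ?S f (as @ i # bs) y\<bar> \<le> C" for i
    using Suc.IH[of "as @ [i]"] Suc.prems by simp
  then obtain C where C: "\<And>i bs. length bs = n \<Longrightarrow> (\<forall>h\<in>set bs. norm h \<le> 1)
           \<Longrightarrow> \<bar>dderiv ?S f (as @ i # bs) y\<bar> \<le> C i"
    by metis
  have "\<bar>dderiv ?S f (as @ h # bs) y\<bar> \<le> (\<Sum>i\<in>Basis. C i)"
    if "length bs = n" "\<forall>h\<in>set bs. norm h \<le> 1" "norm h \<le> 1" for h bs
  proof -
    have "linear (\<lambda>h. dderiv ?S f (as @ h # bs) y)"
      by (rule linear_dderiv_slot[OF ck R _ y]) (use Suc.prems that in simp)
    from linear_abs_le_sum_Basis[OF this \<open>norm h \<le> 1\<close>]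
    show ?thesis using C[OF that(1,2)] by (meson order_trans sum_mono)
  qed
  then show ?case
    by (intro exI[of _ "\<Sum>i\<in>Basis. C i"]) (auto simp: length_Suc_conv)
qed

lemma abs_dderiv_le_dnorm:
  fixes f :: "'a::euclidean_space \<Rightarrow> real"
  assumes ck: "Ck_on N (cball c R) f" and R: "R > 0" and y: "y \<in> cball c R"
    and len: "length hs \<le> N" and hs: "\<forall>h\<in>set hs. norm h \<le> 1"
  shows "\<bar>dderiv (cball c R) f hs y\<bar> \<le> dnorm (length hs) (cball c R) f y"
proof -
  obtain C where "\<And>bs. length bs = length hs \<Longrightarrow> (\<forall>h\<in>set bs. norm h \<le> 1)
           \<Longrightarrow> \<bar>dderiv (cball c R) f bs y\<bar> \<le> C"
    using dderiv_bounded_on_unit_directions[OF ck R y, of "[]" "length hs"] len by auto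
  then show ?thesis unfolding dnorm_def
    by (intro cSup_upper bdd_aboveI) (use hs in auto)
qed

lemma dnorm_le:
  assumes "\<And>hs. length hs = i \<Longrightarrow> \<forall>h\<in>set hs. norm h \<le> 1 \<Longrightarrow> \<bar>dderiv S f hs x\<bar> \<le> B"
  shows "dnorm i S f x \<le> B"
  unfolding dnorm_def
proof (rule cSup_least)
  show "{\<bar>dderiv S f hs x\<bar> |hs. length hs = i \<and> (\<forall>h\<in>set hs. norm h \<le> 1)} \<noteq> {}"
    by (auto intro!: exI[of _ "replicate i 0"])
qed (use assms in auto)

lemma Taylor_dderiv_segment:
  fixes f :: "'a::euclidean_space \<Rightarrow> real"
  assumes ck: "Ck_on N (cball c R) f" and x: "x \<in> ball c R" "x \<noteq> c"
    and n: "n > 0" "length hs + n \<le> N"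
  defines "r \<equiv> norm (x - c)" and "e \<equiv> (1 / norm (x - c)) *\<^sub>R (x - c)"
  shows "\<exists>t. 0 < t \<and> t < r \<and> dderiv (cball c R) f hs x =
     (\<Sum>m<n. dderiv (cball c R) f (replicate m e @ hs) c / fact m * r ^ m)
     + dderiv (cball c R) f (replicate n e @ hs) (c + t *\<^sub>R e) / fact n * r ^ n"
proof -
  let ?S = "cball c R"
  define diff where "diff = (\<lambda>m \<tau>. dderiv ?S f (replicate m e @ hs) (c + \<tau> *\<^sub>R e))"
  have r: "0 < r" "r < R"
    using x by (auto simp: r_def dist_norm norm_minus_commute)
  have e: "norm e = 1"
    using x(2) by (simp add: e_def)
  have "DERIV (diff m) \<tau> :> diff (Suc m) \<tau>" if "m < n" "0 \<le> \<tau>" "\<tau> \<le> r" for m \<tau>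
  proof -
    let ?L = "replicate m e @ hs" and ?z = "c + \<tau> *\<^sub>R e"
    have "?z \<in> ball c R"
      using that r e by (simp add: dist_norm)
    then have d: "(dderiv ?S f ?L has_derivative (\<lambda>h. dderiv ?S f (h # ?L) ?z)) (at ?z)"
      by (rule Ck_on_cball_has_derivative_at[OF ck, rotated]) (use that n in simp)
    have "((\<lambda>\<tau>. c + \<tau> *\<^sub>R e) has_derivative (\<lambda>\<delta>. \<delta> *\<^sub>R e)) (at \<tau>)"
      by (auto intro!: derivative_eq_intros)
    from has_derivative_compose[OF this d]
    have "((\<lambda>\<tau>. dderiv ?S f ?L (c + \<tau> *\<^sub>R e)) has_derivative
        (\<lambda>\<delta>. dderiv ?S f ((\<delta> *\<^sub>R e) # ?L) ?z)) (at \<tau>)" .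
    moreover have "(\<lambda>\<delta>. dderiv ?S f ((\<delta> *\<^sub>R e) # ?L) ?z) = (*) (dderiv ?S f (e # ?L) ?z)"
      using linear_scale[OF has_derivative_linear[OF d]] by (simp add: fun_eq_iff)
    ultimately show ?thesis
      by (simp add: has_field_derivative_def diff_def)
  qed
  moreover have "c + r *\<^sub>R e = x"
    using x(2) by (simp add: r_def e_def)
  ultimately show ?thesis
    using Taylor_up[where diff=diff and f="diff 0" and a=0 and b=r and c=0] n r
    by (simp add: diff_def)
qed

lemma abs_Taylor_term_le:
  fixes d D r R :: real
  assumes "\<bar>d\<bar> \<le> D" "0 \<le> r" "r \<le> R"
  shows "\<bar>d / fact m * r ^ m\<bar> \<le> D * R ^ m"
proof -
  have "D \<ge> 0"
    using assms(1) abs_ge_zero[of d] by linarith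
  then have "D \<le> D * fact m"
    using mult_left_mono[OF fact_ge_1[of m, where 'a=real]] by simp
  then have "\<bar>d\<bar> / fact m \<le> D"
    using assms(1) by (simp add: divide_le_eq)
  have "\<bar>d / fact m * r ^ m\<bar> = \<bar>d\<bar> / fact m * r ^ m"
    using assms(2) by (simp add: abs_mult)
  also have "\<dots> \<le> D * R ^ m"
    using \<open>\<bar>d\<bar> / fact m \<le> D\<close> \<open>D \<ge> 0\<close> assms(2,3) by (intro mult_mono power_mono) auto
  finally show ?thesis .
qed

lemma abs_dderiv_le_Taylor_bound:
  fixes f :: "'a::euclidean_space \<Rightarrow> real"
  assumes ck: "Ck_on N (cball c R) f" and R: "R > 0" and x: "x \<in> cball c R"
    and n: "n > 0" "length hs + n \<le> N"
    and A: "\<And>m gs. m < n \<Longrightarrow> length gs = m \<Longrightarrow> \<forall>g\<in>set gs. norm g \<le> 1 \<Longrightarrow>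
      \<bar>dderiv (cball c R) f (gs @ hs) c\<bar> \<le> A m"
    and K: "\<And>z gs. z \<in> cball c R \<Longrightarrow> length gs = n \<Longrightarrow> \<forall>g\<in>set gs. norm g \<le> 1 \<Longrightarrow>
      \<bar>dderiv (cball c R) f (gs @ hs) z\<bar> \<le> K"
  shows "\<bar>dderiv (cball c R) f hs x\<bar> \<le> (\<Sum>m<n. A m * R ^ m) + K * R ^ n"
proof -
  let ?S = "cball c R" and ?B = "(\<Sum>m<n. A m * R ^ m) + K * R ^ n"
  have A0: "A m \<ge> 0" if "m < n" for m
    using A[OF that, of "replicate m 0"] by (simp add: order_trans[OF abs_ge_zero])
  have K0: "K * R ^ n \<ge> 0"
    using K[of c "replicate n 0"] R by (simp add: order_trans[OF abs_ge_zero])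
  have "\<bar>dderiv ?S f hs y\<bar> \<le> ?B" if y: "y \<in> ball c R" for y
  proof (cases "y = c")
    case True
    have "\<bar>dderiv ?S f hs c\<bar> \<le> A 0 * R ^ 0"
      using A[of 0 "[]"] n by simp
    also have "\<dots> \<le> (\<Sum>m<n. A m * R ^ m)"
      by (rule member_le_sum) (use n A0 R in auto)
    finally show ?thesis
      unfolding True using K0 by linarith
  next
    case False
    define r where "r = norm (y - c)"
    define e where "e = (1 / norm (y - c)) *\<^sub>R (y - c)"
    have r: "0 \<le> r" "r \<le> R" and e: "norm e = 1"
      using y False by (auto simp: r_def e_def dist_norm norm_minus_commute)
    obtain t where t: "0 < t" "t < r" and expansion: "dderiv ?S f hs y =
        (\<Sum>m<n. dderiv ?S f (replicate m e @ hs) c / fact m * r ^ m)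
        + dderiv ?S f (replicate n e @ hs) (c + t *\<^sub>R e) / fact n * r ^ n"
      using Taylor_dderiv_segment[OF ck y False n] unfolding r_def e_def by blast
    have "c + t *\<^sub>R e \<in> ?S"
      using t r e by (simp add: dist_norm)
    then have "\<bar>dderiv ?S f (replicate n e @ hs) (c + t *\<^sub>R e) / fact n * r ^ n\<bar> \<le> K * R ^ n"
      using K e r by (intro abs_Taylor_term_le) auto
    moreover have "\<bar>dderiv ?S f (replicate m e @ hs) c / fact m * r ^ m\<bar> \<le> A m * R ^ m"
      if "m < n" for m
      using A[OF that] e r by (intro abs_Taylor_term_le) auto
    ultimately show ?thesis
      unfolding expansion
      by (intro order_trans[OF abs_triangle_ineq] add_mono order_trans[OF sum_abs] sum_mono) auto
  qed
  moreover have "continuous_on (closure (ball c R)) (\<lambda>y. \<bar>dderiv ?S f hs y\<bar>)"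
    using Ck_on_continuous_on[OF ck, of hs] n R by (auto intro: continuous_on_rabs)
  ultimately show ?thesis
    using continuous_le_on_closure[of "ball c R" "\<lambda>y. \<bar>dderiv ?S f hs y\<bar>" x ?B] x R by simp
qed

lemma powr_le_add_one:
  fixes B \<theta> :: real
  assumes "B \<ge> 0" "0 \<le> \<theta>" "\<theta> \<le> 1"
  shows "B powr \<theta> \<le> B + 1"
proof (cases "B \<le> 1")
  case True
  then have "B powr \<theta> \<le> 1"
    using powr_mono2[of \<theta> B 1] assms by simp
  then show ?thesis
    using assms by linarith
next
  case False
  then have "B powr \<theta> \<le> B powr 1"
    using assms by (intro powr_mono) auto
  then show ?thesis
    using False by simp
qed

lemma powr_frac_mult_power_le:
  fixes a \<Lambda> tc :: real
  assumes a: "a \<ge> 0" "a * tc ^ p \<le> \<Lambda>" and tc: "tc \<ge> 1" and k: "k \<le> p" "p > 0"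
  shows "a powr (real k / real p) * (1 / tc) ^ m \<le> (\<Lambda> + 1) / tc ^ (k + m)"
proof -
  have tc0: "tc > 0"
    using tc by simp
  have "(tc ^ p) powr (real k / real p) = tc ^ k"
    using tc0 k by (simp add: powr_realpow[symmetric] powr_powr)
  then have "a powr (real k / real p) * tc ^ k = (a * tc ^ p) powr (real k / real p)"
    using a tc0 by (simp add: powr_mult)
  also have "\<dots> \<le> a * tc ^ p + 1"
    using a tc0 k by (intro powr_le_add_one) auto
  also have "\<dots> \<le> \<Lambda> + 1"
    using a by simp
  finally have "a powr (real k / real p) \<le> (\<Lambda> + 1) / tc ^ k"
    using tc0 by (simp add: field_simps)
  then have "a powr (real k / real p) * (1 / tc) ^ m \<le> (\<Lambda> + 1) / tc ^ k * (1 / tc) ^ m"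
    by (rule mult_right_mono) (use tc0 in simp)
  then show ?thesis
    by (simp add: power_one_over power_add)
qed

lemma dnorm_le_by_interpolation:
  fixes f :: "'a::euclidean_space \<Rightarrow> real"
  assumes ck: "Ck_on N (cball c (1 / tc)) f" and tc: "tc \<ge> 1" and x: "x \<in> cball c (1 / tc)"
    and i: "i < p" "p \<le> N"
    and a: "a \<ge> 0" "a * tc ^ p \<le> \<Lambda>"
    and low: "\<And>j. i \<le> j \<Longrightarrow> j < p \<Longrightarrow>
      dnorm j (cball c (1 / tc)) f c \<le> a powr ((real p - real j) / real p)"
    and top: "\<And>z. z \<in> cball c (1 / tc) \<Longrightarrow> dnorm p (cball c (1 / tc)) f z \<le> M"
  shows "dnorm i (cball c (1 / tc)) f x \<le> (real (p - i) * (\<Lambda> + 1) + M) / tc ^ (p - i)"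
proof (rule dnorm_le)
  let ?S = "cball c (1 / tc)"
  fix hs :: "'a list"
  assume hs: "length hs = i" "\<forall>h\<in>set hs. norm h \<le> 1"
  define n where "n = p - i"
  have tc0: "tc > 0"
    using tc by simp
  then have c: "c \<in> ?S"
    by simp
  have term_le: "a powr ((real p - real (m + i)) / real p) * (1 / tc) ^ m \<le> (\<Lambda> + 1) / tc ^ n"
    if "m < n" for m
  proof -
    have "(real p - real (m + i)) / real p = real (n - m) / real p"
      using that by (simp add: n_def of_nat_diff algebra_simps)
    moreover have "n - m + m = n"
      using that by simp
    ultimately show ?thesis
      using powr_frac_mult_power_le[OF a tc, of "n - m" m] i by (simp add: n_def)
  qed
  have "\<bar>dderiv (cball c (1 / tc)) f hs x\<bar>
      \<le> (\<Sum>m<n. a powr ((real p - real (m + i)) / real p) * (1 / tc) ^ m) + M * (1 / tc) ^ n"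
  proof (rule abs_dderiv_le_Taylor_bound[OF ck _ x])
    fix m :: nat and gs :: "'a list"
    assume gs: "m < n" "length gs = m" "\<forall>g\<in>set gs. norm g \<le> 1"
    then have "\<bar>dderiv ?S f (gs @ hs) c\<bar> \<le> dnorm (length (gs @ hs)) ?S f c"
      using hs tc0 i by (intro abs_dderiv_le_dnorm[OF ck _ c]) (auto simp: n_def)
    also have "\<dots> \<le> a powr ((real p - real (m + i)) / real p)"
      using low[of "m + i"] gs hs by (simp add: n_def add.commute)
    finally show "\<bar>dderiv ?S f (gs @ hs) c\<bar> \<le> a powr ((real p - real (m + i)) / real p)" .
  next
    fix z and gs :: "'a list"
    assume gs: "z \<in> ?S" "length gs = n" "\<forall>g\<in>set gs. norm g \<le> 1"
    then have "\<bar>dderiv ?S f (gs @ hs) z\<bar> \<le> dnorm (length (gs @ hs)) ?S f z"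
      using hs tc0 i by (intro abs_dderiv_le_dnorm[OF ck]) (auto simp: n_def)
    also have "\<dots> \<le> M"
      using top[OF gs(1)] gs hs i by (simp add: n_def)
    finally show "\<bar>dderiv ?S f (gs @ hs) z\<bar> \<le> M" .
  qed (use tc0 i hs n_def in auto)
  also have "\<dots> \<le> (\<Sum>m<n. (\<Lambda> + 1) / tc ^ n) + M / tc ^ n"
    by (intro add_mono sum_mono term_le) (auto simp: power_one_over)
  also have "\<dots> = (real n * (\<Lambda> + 1) + M) / tc ^ n"
    using tc0 by (simp add: field_simps)
  finally show "\<bar>dderiv (cball c (1 / tc)) f hs x\<bar> \<le> (real (p - i) * (\<Lambda> + 1) + M) / tc ^ (p - i)"
    unfolding n_def .
qed

lemma scaled_gap_le_lyap: "t ^ p * (f x - f xstar) \<le> lyap p f xstar v x t"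
  unfolding lyap_def by simp

lemma interpolation_constant_le:
  fixes L M E :: real
  assumes i: "1 \<le> i" "i \<le> p" and "L \<ge> 0" "M \<ge> 0" "E \<ge> 0"
  shows "real (p - i) * (L * E + 1) + M \<le> real p * (M + L + 1) * (E + 1)"
proof -
  have "real (p - i) * (L * E + 1) \<le> (real p - 1) * ((M + L + 1) * (E + 1))"
    using assms by (intro mult_mono) (auto simp: of_nat_diff algebra_simps)
  moreover have "M \<le> (M + L + 1) * (E + 1)"
    using assms by (simp add: algebra_simps)
  ultimately show ?thesis
    by (simp add: algebra_simps)
qed

theorem mainTheorem1:
  fixes f :: "'a::euclidean_space \<Rightarrow> real"
    and xstar vc xc :: 'a
    and tc L M :: real
    and p s :: nat
  assumes p2: "p \<ge> 2" and sp: "s \<ge> p" and L: "L > 0" and M: "M > 0"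
    and cvx: "convex_on UNIV f"
    and minz: "\<forall>x. f xstar \<le> f x"
    and tc: "tc \<ge> 1"
    and smooth: "Ck_on (s + 1) (cball xc (1 / tc)) f"
    and hi: "\<forall>x\<in>cball xc (1 / tc). \<forall>i\<in>{1..p-1}.
               dnorm i (cball xc (1 / tc)) f x \<le> (L * (f x - f xstar)) powr ((real p - real i) / real p)"
    and hii: "\<forall>x\<in>cball xc (1 / tc). \<forall>i\<in>{p..s+1}. dnorm i (cball xc (1 / tc)) f x \<le> M"
  shows "\<forall>v x t. norm (v - vc) \<le> 1 / tc \<and> norm (x - xc) \<le> 1 / tc \<and> \<bar>t - tc\<bar> \<le> 0.2 \<longrightarrow>
           (\<forall>i\<in>{1..p}. dnorm i (cball xc (1 / tc)) f x
              \<le> real p * (M + L + 1) * (lyap p f xstar vc xc tc + 1) / tc ^ (p - i))"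
proof (intro allI impI ballI)
  fix v x t i
  assume "norm (v - vc) \<le> 1 / tc \<and> norm (x - xc) \<le> 1 / tc \<and> \<bar>t - tc\<bar> \<le> 0.2"
    and i: "i \<in> {1..p}"
  then have x: "x \<in> cball xc (1 / tc)"
    by (simp add: dist_norm norm_minus_commute)
  define E where "E = lyap p f xstar vc xc tc"
  have gap: "f xc - f xstar \<ge> 0"
    using minz by simp
  have E: "tc ^ p * (f xc - f xstar) \<le> E"
    unfolding E_def by (rule scaled_gap_le_lyap)
  then have E0: "E \<ge> 0"
    using gap tc by (smt (verit) zero_le_mult_iff zero_le_power)
  have "dnorm i (cball xc (1 / tc)) f x \<le> (real (p - i) * (L * E + 1) + M) / tc ^ (p - i)"
  proof (cases "i = p")
    case True
    then show ?thesis
      using hii x sp by auto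
  next
    case False
    have xc: "xc \<in> cball xc (1 / tc)"
      using tc by simp
    have "L * (f xc - f xstar) * tc ^ p \<le> L * E"
      using E L by (simp add: ac_simps)
    with False i gap L sp hi hii xc show ?thesis
      by (intro dnorm_le_by_interpolation[OF smooth tc x, where a="L * (f xc - f xstar)"]) auto
  qed
  also have "\<dots> \<le> real p * (M + L + 1) * (E + 1) / tc ^ (p - i)"
    by (intro divide_right_mono interpolation_constant_le) (use i L M E0 tc in auto)
  finally show "dnorm i (cball xc (1 / tc)) f x
      \<le> real p * (M + L + 1) * (lyap p f xstar vc xc tc + 1) / tc ^ (p - i)"
    unfolding E_def .
qed

end
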